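(* Let $G$ be a graph on $n$ vertices without isolated vertices. For every $n-i\gamma(G)$ covers $W_1,\dots,W_{n-i\gamma(G)}$ of $G$, there is a cover $W$ of $G$ of the form $W=\{w_{i_1},\dots,w_{i_k}\}$ with $1\le i_1<\dots<i_k\le n-i\gamma(G)$ and $w_{i_j}\in W_{i_j}$ for each $j\in[k]$.
   Context: A cover of $G$ is a set $W\subseteq V(G)$ containing at least one endpoint of every edge. $\gamma(G;A)$ is the minimum size of a set $D$ such that every vertex of $A$ has a neighbor in $D$; $i\gamma(G)=\max\{\gamma(G;I): I\text{ an independent set of }G\}$. *)

theory Defs
  imports Main
begin

definition simple_graph :: "'a set \<Rightarrow> ('a \<Rightarrow> 'a \<Rightarrow> bool) \<Rightarrow> bool" where
  "simple_graph V E \<longleftrightarrow> finite V \<and> (\<forall>u v. E u v \<longrightarrow> u \<in> V \<and> v \<in> V)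
     \<and> (\<forall>u v. E u v \<longrightarrow> E v u) \<and> (\<forall>v. \<not> E v v)"

definition no_isolated :: "'a set \<Rightarrow> ('a \<Rightarrow> 'a \<Rightarrow> bool) \<Rightarrow> bool" where
  "no_isolated V E \<longleftrightarrow> (\<forall>v\<in>V. \<exists>u. E v u)"

definition is_cover :: "'a set \<Rightarrow> ('a \<Rightarrow> 'a \<Rightarrow> bool) \<Rightarrow> 'a set \<Rightarrow> bool" where
  "is_cover V E W \<longleftrightarrow> W \<subseteq> V \<and> (\<forall>u v. E u v \<longrightarrow> u \<in> W \<or> v \<in> W)"

definition independent :: "'a set \<Rightarrow> ('a \<Rightarrow> 'a \<Rightarrow> bool) \<Rightarrow> 'a set \<Rightarrow> bool" where
  "independent V E I \<longleftrightarrow> I \<subseteq> V \<and> (\<forall>u\<in>I. \<forall>v\<in>I. \<not> E u v)"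

definition gamma_on :: "'a set \<Rightarrow> ('a \<Rightarrow> 'a \<Rightarrow> bool) \<Rightarrow> 'a set \<Rightarrow> nat" where
  "gamma_on V E A = Min {card D | D. D \<subseteq> V \<and> (\<forall>a\<in>A. \<exists>d\<in>D. E a d)}"

definition igamma :: "'a set \<Rightarrow> ('a \<Rightarrow> 'a \<Rightarrow> bool) \<Rightarrow> nat" where
  "igamma V E = Max {gamma_on V E I | I. independent V E I}"

end

theory Submission
  imports Defs
begin

text \<open>Fix a maximal independent set \<open>I\<close> with \<open>\<gamma>(G;I) \<ge> i\<gamma>(G)\<close>. Among injective choices of
  representatives from the \<open>m = n - i\<gamma>(G)\<close> covers, take one that covers the most edges avoiding
  \<open>I\<close> and, subject to that, the most edges; then drop every chosen vertex of \<open>I\<close> all of whose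
  neighbours are chosen, which loses no covered edge. Suppose an edge \<open>xy\<close> is still uncovered.
  If some cover is unused, adding the endpoint of \<open>xy\<close> lying in it covers more edges. Otherwise
  all \<open>m\<close> covers are used, so at most \<open>i\<gamma>(G) \<le> \<gamma>(G;I)\<close> vertices are unchosen; if some edge
  \<open>au\<close> with \<open>a \<in> I\<close> had both ends unchosen, the unchosen vertices outside \<open>I\<close>, together with one
  neighbour of each unchosen vertex of \<open>I - {a}\<close>, would dominate \<open>I\<close> with fewer than \<open>\<gamma>(G;I)\<close>
  vertices. Hence \<open>x, y \<notin> I\<close> and \<open>x\<close> has a chosen neighbour \<open>a \<in> I\<close>; replacing \<open>a\<close> by the
  endpoint of \<open>xy\<close> in the cover of \<open>a\<close> covers the edge \<open>xy\<close> avoiding \<open>I\<close> and loses none.\<close>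

lemma card_Diff_Un_image_less:
  assumes "finite A" "a \<in> A" "a \<in> I"
  shows "card ((A - I) \<union> f ` (A \<inter> I - {a})) < card A"
proof -
  have "card ((A - I) \<union> f ` (A \<inter> I - {a})) \<le> card (A - I) + card (f ` (A \<inter> I - {a}))"
    by (rule card_Un_le)
  also have "\<dots> \<le> card (A - I) + card (A \<inter> I - {a})"
    using assms(1) card_image_le[of "A \<inter> I - {a}" f] by simp
  also have "\<dots> = card ((A - I) \<union> (A \<inter> I - {a}))"
    using assms(1) by (intro card_Un_disjoint[symmetric]) auto
  also have "(A - I) \<union> (A \<inter> I - {a}) = A - {a}"
    using assms(3) by blast
  also have "card (A - {a}) < card A"
    using assms(1,2) by (rule card_Diff1_less)
  finally show ?thesis .
qed

lemma ex_lex_greatest_nat: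
  fixes f g :: "'b \<Rightarrow> nat"
  assumes "P k" "\<forall>y. P y \<longrightarrow> f y < b" "\<forall>y. P y \<longrightarrow> g y < b"
  obtains x where "P x" "\<forall>y. P y \<longrightarrow> f y \<le> f x" "\<forall>y. P y \<and> f y = f x \<longrightarrow> g y \<le> g x"
proof -
  obtain x\<^sub>0 where x\<^sub>0: "P x\<^sub>0" "\<forall>y. P y \<longrightarrow> f y \<le> f x\<^sub>0"
    using ex_has_greatest_nat[OF assms(1,2)] by blast
  moreover obtain x where "P x \<and> f x = f x\<^sub>0" "\<forall>y. P y \<and> f y = f x\<^sub>0 \<longrightarrow> g y \<le> g x"
    using ex_has_greatest_nat[of "\<lambda>y. P y \<and> f y = f x\<^sub>0" x\<^sub>0 g b] x\<^sub>0(1) assms(3) by blast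
  ultimately show ?thesis
    using that by auto
qed

lemma simple_graphD:
  assumes "simple_graph V E"
  shows "finite V" and "E u v \<Longrightarrow> u \<in> V" and "E u v \<Longrightarrow> v \<in> V"
    and "E u v \<Longrightarrow> E v u" and "\<not> E v v"
  using assms by (auto simp: simple_graph_def)

lemma gamma_on_le_card:
  assumes "finite V" "D \<subseteq> V" "\<forall>a\<in>A. \<exists>d\<in>D. E a d"
  shows "gamma_on V E A \<le> card D"
proof -
  have "finite {card D | D. D \<subseteq> V \<and> (\<forall>a\<in>A. \<exists>d\<in>D. E a d)}"
    by (rule finite_subset[of _ "{..card V}"]) (auto intro: card_mono[OF \<open>finite V\<close>])
  then show ?thesis
    unfolding gamma_on_def using assms(2,3) by (intro Min_le) auto
qed

lemma gamma_on_mono: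
  assumes "finite V" "\<forall>a\<in>A. \<exists>d\<in>V. E a d" "B \<subseteq> A"
  shows "gamma_on V E B \<le> gamma_on V E A"
proof -
  let ?S = "{card D | D. D \<subseteq> V \<and> (\<forall>a\<in>A. \<exists>d\<in>D. E a d)}"
  have "finite ?S"
    by (rule finite_subset[of _ "{..card V}"]) (auto intro: card_mono[OF \<open>finite V\<close>])
  moreover have "?S \<noteq> {}"
    using assms(2) by blast
  ultimately have "gamma_on V E A \<in> ?S"
    unfolding gamma_on_def by (rule Min_in)
  then obtain D where D: "D \<subseteq> V" "\<forall>a\<in>A. \<exists>d\<in>D. E a d" "gamma_on V E A = card D"
    by blast
  with assms(3) show ?thesis
    using gamma_on_le_card[OF assms(1) D(1), of B E] by auto
qed

lemma independent_extends_to_maximal: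
  assumes sg: "simple_graph V E" and "independent V E I\<^sub>0"
  obtains I where "independent V E I" "I\<^sub>0 \<subseteq> I" "\<forall>x\<in>V - I. \<exists>a\<in>I. E x a"
proof -
  let ?F = "{J. independent V E J \<and> I\<^sub>0 \<subseteq> J}"
  have "finite ?F"
    using simple_graphD(1)[OF sg] by (auto simp: independent_def intro: finite_subset[of _ "Pow V"])
  moreover have "?F \<noteq> {}"
    using assms(2) by blast
  ultimately obtain I where I: "I \<in> ?F" and max: "\<And>J. J \<in> ?F \<Longrightarrow> I \<subseteq> J \<Longrightarrow> I = J"
    using finite_has_maximal[of ?F] by metis
  have "\<exists>a\<in>I. E x a" if x: "x \<in> V - I" for x
  proof -
    have "insert x I \<notin> ?F"
      using max[of "insert x I"] x by auto
    then have "\<not> independent V E (insert x I)"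
      using I by auto
    then obtain u v where uv: "u \<in> insert x I" "v \<in> insert x I" "E u v"
      using I x unfolding independent_def by auto
    have "\<not> (u \<in> I \<and> v \<in> I)" "u \<noteq> v" "E v u"
      using I uv(3) simple_graphD(4,5)[OF sg] unfolding independent_def by blast+
    with uv show ?thesis
      by blast
  qed
  with I that show ?thesis
    by blast
qed

lemma exists_maximal_independent_igamma:
  assumes sg: "simple_graph V E" and ni: "no_isolated V E"
  obtains I where "independent V E I" "\<forall>x\<in>V - I. \<exists>a\<in>I. E x a" "igamma V E \<le> gamma_on V E I"
proof -
  have fin: "finite V"
    using simple_graphD(1)[OF sg] .
  have nbr: "\<forall>a\<in>A. \<exists>d\<in>V. E a d" if "A \<subseteq> V" for A
    using that ni simple_graphD(3)[OF sg] by (fastforce simp: no_isolated_def)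
  let ?G = "{gamma_on V E I | I. independent V E I}"
  have "?G \<subseteq> {..card V}"
    using gamma_on_le_card[OF fin order.refl nbr] by (auto simp: independent_def)
  then have "finite ?G"
    using finite_subset by blast
  moreover have "independent V E {}"
    by (simp add: independent_def)
  then have "?G \<noteq> {}"
    by blast
  ultimately have "igamma V E \<in> ?G"
    unfolding igamma_def by (rule Max_in)
  then obtain I\<^sub>0 where I\<^sub>0: "independent V E I\<^sub>0" "igamma V E = gamma_on V E I\<^sub>0"
    by blast
  obtain I where I: "independent V E I" "I\<^sub>0 \<subseteq> I" "\<forall>x\<in>V - I. \<exists>a\<in>I. E x a"
    using independent_extends_to_maximal[OF sg I\<^sub>0(1)] .
  have "gamma_on V E I\<^sub>0 \<le> gamma_on V E I"
    using I by (intro gamma_on_mono[OF fin nbr]) (auto simp: independent_def)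
  with I I\<^sub>0(2) that show ?thesis
    by simp
qed

definition covered_edges :: "('a \<Rightarrow> 'a \<Rightarrow> bool) \<Rightarrow> 'a set \<Rightarrow> ('a \<times> 'a) set" where
  "covered_edges E C = {(u, v). E u v \<and> (u \<in> C \<or> v \<in> C)}"

definition covered_edges_avoiding :: "('a \<Rightarrow> 'a \<Rightarrow> bool) \<Rightarrow> 'a set \<Rightarrow> 'a set \<Rightarrow> ('a \<times> 'a) set" where
  "covered_edges_avoiding E I C = {(u, v) \<in> covered_edges E C. u \<notin> I \<and> v \<notin> I}"

lemma covered_edges_subset:
  "simple_graph V E \<Longrightarrow> covered_edges E C \<subseteq> V \<times> V"
  by (auto simp: covered_edges_def dest: simple_graphD(2,3))

lemma finite_covered_edges:
  assumes "simple_graph V E"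
  shows "finite (covered_edges E C)"
  using finite_subset[OF covered_edges_subset[OF assms]] simple_graphD(1)[OF assms] by blast

lemma covered_edges_avoiding_subset:
  "covered_edges_avoiding E I C \<subseteq> covered_edges E C"
  by (auto simp: covered_edges_avoiding_def)

lemma covered_edges_mono:
  "C \<subseteq> C' \<Longrightarrow> covered_edges E C \<subseteq> covered_edges E C'"
  by (auto simp: covered_edges_def)

lemma covered_edges_avoiding_mono:
  "C \<subseteq> C' \<Longrightarrow> covered_edges_avoiding E I C \<subseteq> covered_edges_avoiding E I C'"
  by (auto simp: covered_edges_avoiding_def covered_edges_def)

lemma covered_edges_avoiding_Diff:
  "A \<subseteq> I \<Longrightarrow> covered_edges_avoiding E I (C - A) = covered_edges_avoiding E I C"
  by (auto simp: covered_edges_avoiding_def covered_edges_def)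

definition essential :: "('a \<Rightarrow> 'a \<Rightarrow> bool) \<Rightarrow> 'a set \<Rightarrow> 'a set \<Rightarrow> bool" where
  "essential E I C \<longleftrightarrow> (\<forall>a\<in>I \<inter> C. \<exists>u. E a u \<and> u \<notin> C)"

lemma essential_prune:
  "essential E I (C - {a \<in> I \<inter> C. \<forall>u. E a u \<longrightarrow> u \<in> C})"
  by (auto simp: essential_def)

lemma covered_edges_prune:
  assumes sg: "simple_graph V E" and ind: "independent V E I"
  shows "covered_edges E (C - {a \<in> I \<inter> C. \<forall>u. E a u \<longrightarrow> u \<in> C}) = covered_edges E C"
proof
  show "covered_edges E (C - {a \<in> I \<inter> C. \<forall>u. E a u \<longrightarrow> u \<in> C}) \<subseteq> covered_edges E C"
    by (rule covered_edges_mono) blast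
  have "\<not> (u \<in> I \<and> v \<in> I)" "E v u" if "E u v" for u v
    using that ind simple_graphD(4)[OF sg] by (auto simp: independent_def)
  then show "covered_edges E C \<subseteq> covered_edges E (C - {a \<in> I \<inter> C. \<forall>u. E a u \<longrightarrow> u \<in> C})"
    unfolding covered_edges_def by blast
qed

definition rainbow :: "(nat \<Rightarrow> 'a set) \<Rightarrow> nat \<Rightarrow> 'a set \<Rightarrow> ('a \<Rightarrow> nat) \<Rightarrow> bool" where
  "rainbow Ws m C \<sigma> \<longleftrightarrow> inj_on \<sigma> C \<and> \<sigma> ` C \<subseteq> {..<m} \<and> (\<forall>c\<in>C. c \<in> Ws (\<sigma> c))"

lemma rainbow_subset:
  "rainbow Ws m C \<sigma> \<Longrightarrow> C' \<subseteq> C \<Longrightarrow> rainbow Ws m C' \<sigma>"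
  by (auto simp: rainbow_def intro: inj_on_subset)

lemma rainbow_insert:
  assumes "rainbow Ws m C \<sigma>" "i < m" "i \<notin> \<sigma> ` C" "z \<in> Ws i" "z \<notin> C"
  shows "rainbow Ws m (insert z C) (\<sigma>(z := i))"
  using assms by (auto simp: rainbow_def inj_on_def)

lemma rainbow_in_vertices:
  assumes "rainbow Ws m C \<sigma>" "\<forall>i<m. is_cover V E (Ws i)"
  shows "C \<subseteq> V"
proof
  fix c assume "c \<in> C"
  then have "\<sigma> c < m" "c \<in> Ws (\<sigma> c)"
    using assms(1) by (auto simp: rainbow_def)
  with assms(2) show "c \<in> V"
    by (auto simp: is_cover_def)
qed

lemma card_rainbow_full:
  assumes "rainbow Ws m C \<sigma>" "\<sigma> ` C = {..<m}"
  shows "card C = m"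
  using assms card_image[of \<sigma> C] by (simp add: rainbow_def)

lemma small_dominating_set_outside_essential:
  assumes sg: "simple_graph V E" and ni: "no_isolated V E" and ind: "independent V E I"
    and ess: "essential E I C" and a: "a \<in> I" "E a u" "a \<notin> C" "u \<notin> C"
  obtains D where "D \<subseteq> V" "card D < card (V - C)" "\<forall>x\<in>I. \<exists>d\<in>D. E x d"
proof -
  have IV: "I \<subseteq> V"
    using ind by (simp add: independent_def)
  have noI: "v \<notin> I" if "x \<in> I" "E x v" for x v
    using that ind by (auto simp: independent_def)
  define U where "U = V - C"
  define f where "f v = (SOME w. E v w)" for v
  define D where "D = (U - I) \<union> f ` (U \<inter> I - {a})"
  have f: "E v (f v)" if "v \<in> V" for v
    using that ni someI_ex[of "E v"] by (auto simp: no_isolated_def f_def)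
  have "D \<subseteq> V"
    unfolding D_def U_def using f simple_graphD(3)[OF sg] by blast
  moreover have "card D < card U"
    unfolding D_def using simple_graphD(1)[OF sg] a IV
    by (intro card_Diff_Un_image_less) (auto simp: U_def)
  moreover have "\<exists>d\<in>D. E x d" if x: "x \<in> I" for x
  proof -
    consider "x \<in> C" | "x = a" | "x \<in> U \<inter> I - {a}"
      using x IV unfolding U_def by blast
    then show ?thesis
    proof cases
      case 1
      then obtain w where "E x w" "w \<notin> C"
        using ess x by (auto simp: essential_def)
      with x show ?thesis
        unfolding D_def U_def using noI simple_graphD(3)[OF sg] by blast
    next
      case 2
      with a show ?thesis
        unfolding D_def U_def using noI simple_graphD(3)[OF sg] by blast
    next
      case 3
      with f IV show ?thesis
        unfolding D_def by blast
    qed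
  qed
  ultimately show ?thesis
    using that unfolding U_def by blast
qed

lemma independent_edge_meets_essential:
  assumes sg: "simple_graph V E" and ni: "no_isolated V E" and ind: "independent V E I"
    and CV: "C \<subseteq> V" and ess: "essential E I C" and large: "card V \<le> card C + gamma_on V E I"
    and a: "a \<in> I" "E a u"
  shows "a \<in> C \<or> u \<in> C"
proof (rule ccontr)
  assume "\<not> (a \<in> C \<or> u \<in> C)"
  then obtain D where D: "D \<subseteq> V" "card D < card (V - C)" "\<forall>x\<in>I. \<exists>d\<in>D. E x d"
    using small_dominating_set_outside_essential[OF sg ni ind ess a] by blast
  have "card (V - C) \<le> gamma_on V E I"
    using large CV simple_graphD(1)[OF sg] by (simp add: card_Diff_subset finite_subset)
  also have "\<dots> \<le> card D"
    using gamma_on_le_card[OF simple_graphD(1)[OF sg] D(1,3)] .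
  finally show False
    using D(2) by simp
qed

lemma rainbow_extend_to_edge:
  assumes "rainbow Ws m C \<sigma>" "i < m" "i \<notin> \<sigma> ` C" "is_cover V E (Ws i)"
    and "E x y" "x \<notin> C" "y \<notin> C"
  obtains C' \<sigma>' where "rainbow Ws m C' \<sigma>'" "C \<subseteq> C'" "(x, y) \<in> covered_edges E C'"
proof -
  obtain z where "z \<in> Ws i" "z = x \<or> z = y"
    using assms(4,5) unfolding is_cover_def by blast
  with assms have "rainbow Ws m (insert z C) (\<sigma>(z := i))" "(x, y) \<in> covered_edges E (insert z C)"
    by (auto intro: rainbow_insert simp: covered_edges_def)
  with that show ?thesis
    by blast
qed

lemma improve_rainbow_by_unused_cover:
  assumes rb: "rainbow Ws m C \<sigma>"
    and "i < m" "i \<notin> \<sigma> ` C" "is_cover V E (Ws i)" and xy: "E x y" "x \<notin> C" "y \<notin> C"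
  obtains C' \<sigma>' where "rainbow Ws m C' \<sigma>'"
    "covered_edges_avoiding E I C \<subseteq> covered_edges_avoiding E I C'"
    "covered_edges E C \<subset> covered_edges E C'"
proof -
  obtain C' \<sigma>' where C': "rainbow Ws m C' \<sigma>'" "C \<subseteq> C'" "(x, y) \<in> covered_edges E C'"
    using rainbow_extend_to_edge[of Ws m C \<sigma> i V E x y] assms by blast
  have "(x, y) \<notin> covered_edges E C"
    using xy by (simp add: covered_edges_def)
  then have "covered_edges E C \<subset> covered_edges E C'"
    using covered_edges_mono[OF C'(2), of E] C'(3) by blast
  with C' show ?thesis
    using that covered_edges_avoiding_mono[OF C'(2), of E I] by blast
qed

lemma improve_full_rainbow:
  assumes sg: "simple_graph V E" and ni: "no_isolated V E"
    and covers: "\<forall>i<m. is_cover V E (Ws i)"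
    and ind: "independent V E I" and max: "\<forall>x\<in>V - I. \<exists>a\<in>I. E x a"
    and large: "card V \<le> m + gamma_on V E I"
    and rb: "rainbow Ws m C \<sigma>" and full: "\<sigma> ` C = {..<m}" and ess: "essential E I C"
    and xy: "E x y" "x \<notin> C" "y \<notin> C"
  obtains C' \<sigma>' where "rainbow Ws m C' \<sigma>'"
    "covered_edges_avoiding E I C \<subset> covered_edges_avoiding E I C'"
proof -
  have CV: "C \<subseteq> V"
    using rb covers by (rule rainbow_in_vertices)
  have "card V \<le> card C + gamma_on V E I"
    using large card_rainbow_full[OF rb full] by simp
  note meets = independent_edge_meets_essential[OF sg ni ind CV ess this]
  have xyI: "x \<notin> I" "y \<notin> I"
    using meets xy simple_graphD(4)[OF sg] by blast+
  obtain a where a: "a \<in> I" "E x a"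
    using max xy(1) xyI simple_graphD(2)[OF sg] by blast
  have "a \<in> C"
    using meets[OF a(1)] a(2) xy(2) simple_graphD(4)[OF sg] by blast
  then have "\<sigma> a < m" "\<sigma> a \<notin> \<sigma> ` (C - {a})"
    using rb by (auto simp: rainbow_def inj_on_def)
  then obtain C' \<sigma>' where C': "rainbow Ws m C' \<sigma>'" "C - {a} \<subseteq> C'" "(x, y) \<in> covered_edges E C'"
    using rainbow_extend_to_edge[of Ws m "C - {a}" \<sigma> "\<sigma> a" V E x y] rainbow_subset[OF rb] covers xy
    by blast
  have "covered_edges_avoiding E I C = covered_edges_avoiding E I (C - {a})"
    using a(1) by (simp add: covered_edges_avoiding_Diff)
  also have "\<dots> \<subseteq> covered_edges_avoiding E I C'"
    using C'(2) by (rule covered_edges_avoiding_mono)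
  finally have "covered_edges_avoiding E I C \<subseteq> covered_edges_avoiding E I C'" .
  moreover have "(x, y) \<in> covered_edges_avoiding E I C' - covered_edges_avoiding E I C"
    using C'(3) xy xyI by (simp add: covered_edges_avoiding_def covered_edges_def)
  ultimately show ?thesis
    using that C'(1) by blast
qed

lemma optimal_rainbow_is_cover:
  assumes sg: "simple_graph V E" and ni: "no_isolated V E"
    and covers: "\<forall>i<m. is_cover V E (Ws i)"
    and ind: "independent V E I" and max: "\<forall>x\<in>V - I. \<exists>a\<in>I. E x a"
    and large: "card V \<le> m + gamma_on V E I"
    and rb: "rainbow Ws m C \<sigma>" and ess: "essential E I C"
    and opt_avoiding: "\<And>C' \<sigma>'. rainbow Ws m C' \<sigma>' \<Longrightarrow>
      card (covered_edges_avoiding E I C') \<le> card (covered_edges_avoiding E I C)"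
    and opt_covered: "\<And>C' \<sigma>'. rainbow Ws m C' \<sigma>' \<Longrightarrow>
      card (covered_edges_avoiding E I C') = card (covered_edges_avoiding E I C) \<Longrightarrow>
      card (covered_edges E C') \<le> card (covered_edges E C)"
  shows "is_cover V E C"
proof -
  note fin = finite_covered_edges[OF sg]
  have fin_avoiding: "finite (covered_edges_avoiding E I C')" for C'
    using fin covered_edges_avoiding_subset by (rule finite_subset[rotated])
  have "x \<in> C \<or> y \<in> C" if xy: "E x y" for x y
  proof (rule ccontr)
    assume "\<not> (x \<in> C \<or> y \<in> C)"
    then have out: "x \<notin> C" "y \<notin> C"
      by auto
    show False
    proof (cases "\<sigma> ` C = {..<m}")
      case True
      obtain C' \<sigma>' where "rainbow Ws m C' \<sigma>'"
        "covered_edges_avoiding E I C \<subset> covered_edges_avoiding E I C'"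
        using improve_full_rainbow[OF sg ni covers ind max large rb True ess xy out] .
      then show False
        using opt_avoiding psubset_card_mono[OF fin_avoiding] by (meson leD)
    next
      case False
      then obtain i where "i < m" "i \<notin> \<sigma> ` C"
        using rb by (auto simp: rainbow_def)
      with improve_rainbow_by_unused_cover[OF rb this] covers xy out
      obtain C' \<sigma>' where C': "rainbow Ws m C' \<sigma>'"
        "covered_edges_avoiding E I C \<subseteq> covered_edges_avoiding E I C'"
        "covered_edges E C \<subset> covered_edges E C'"
        by blast
      have "card (covered_edges_avoiding E I C') = card (covered_edges_avoiding E I C)"
        using opt_avoiding[OF C'(1)] card_mono[OF fin_avoiding C'(2)] by simp
      then show False
        using opt_covered[OF C'(1)] psubset_card_mono[OF fin C'(3)] by simp
    qed
  qed
  with rainbow_in_vertices[OF rb covers] show ?thesis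
    by (simp add: is_cover_def)
qed

lemma exists_lex_optimal_rainbow:
  assumes sg: "simple_graph V E"
  obtains C \<sigma> where "rainbow Ws m C \<sigma>"
    "\<And>C' \<sigma>'. rainbow Ws m C' \<sigma>' \<Longrightarrow>
      card (covered_edges_avoiding E I C') \<le> card (covered_edges_avoiding E I C)"
    "\<And>C' \<sigma>'. rainbow Ws m C' \<sigma>' \<Longrightarrow>
      card (covered_edges_avoiding E I C') = card (covered_edges_avoiding E I C) \<Longrightarrow>
      card (covered_edges E C') \<le> card (covered_edges E C)"
proof -
  define b where "b = Suc (card (V \<times> V))"
  have fin: "finite (V \<times> V)"
    using simple_graphD(1)[OF sg] by blast
  have bound: "card (covered_edges E C) < b" for C
    using card_mono[OF fin covered_edges_subset[OF sg]] unfolding b_def by (simp only: less_Suc_eq_le)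
  have "card (covered_edges_avoiding E I C) \<le> card (covered_edges E C)" for C
    using finite_covered_edges[OF sg] covered_edges_avoiding_subset by (rule card_mono)
  then have bound_avoiding: "card (covered_edges_avoiding E I C) < b" for C
    using bound le_less_trans by blast
  have "case_prod (rainbow Ws m) ({}, \<lambda>_. 0)"
    by (simp add: rainbow_def)
  then obtain p where "case_prod (rainbow Ws m) p"
    "\<forall>q. case_prod (rainbow Ws m) q \<longrightarrow>
      card (covered_edges_avoiding E I (fst q)) \<le> card (covered_edges_avoiding E I (fst p))"
    "\<forall>q. case_prod (rainbow Ws m) q \<and>
      card (covered_edges_avoiding E I (fst q)) = card (covered_edges_avoiding E I (fst p)) \<longrightarrow>
      card (covered_edges E (fst q)) \<le> card (covered_edges E (fst p))"
    using ex_lex_greatest_nat[of "case_prod (rainbow Ws m)" _ "\<lambda>q. card (covered_edges_avoiding E I (fst q))" b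
        "\<lambda>q. card (covered_edges E (fst q))"] bound bound_avoiding by blast
  moreover obtain C \<sigma> where "p = (C, \<sigma>)"
    by fastforce
  ultimately show ?thesis
    using that[of C \<sigma>] by (auto dest: spec[of _ "(_, _)"])
qed

lemma exists_rainbow_cover:
  assumes sg: "simple_graph V E" and ni: "no_isolated V E"
    and covers: "\<forall>i<m. is_cover V E (Ws i)" and large: "card V \<le> m + igamma V E"
  obtains C \<sigma> where "rainbow Ws m C \<sigma>" "is_cover V E C"
proof -
  obtain I where ind: "independent V E I" and max: "\<forall>x\<in>V - I. \<exists>a\<in>I. E x a"
    and "igamma V E \<le> gamma_on V E I"
    using exists_maximal_independent_igamma[OF sg ni] .
  with large have large_I: "card V \<le> m + gamma_on V E I"
    by simp
  obtain C\<^sub>0 \<sigma> where rb\<^sub>0: "rainbow Ws m C\<^sub>0 \<sigma>"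
    and opt: "\<And>C' \<sigma>'. rainbow Ws m C' \<sigma>' \<Longrightarrow>
      card (covered_edges_avoiding E I C') \<le> card (covered_edges_avoiding E I C\<^sub>0)"
    and opt': "\<And>C' \<sigma>'. rainbow Ws m C' \<sigma>' \<Longrightarrow>
      card (covered_edges_avoiding E I C') = card (covered_edges_avoiding E I C\<^sub>0) \<Longrightarrow>
      card (covered_edges E C') \<le> card (covered_edges E C\<^sub>0)"
    using exists_lex_optimal_rainbow[OF sg] by blast
  define C where "C = C\<^sub>0 - {a \<in> I \<inter> C\<^sub>0. \<forall>u. E a u \<longrightarrow> u \<in> C\<^sub>0}"
  have same: "covered_edges E C = covered_edges E C\<^sub>0"
    "covered_edges_avoiding E I C = covered_edges_avoiding E I C\<^sub>0"
    unfolding C_def covered_edges_avoiding_def covered_edges_prune[OF sg ind] by simp_all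
  have "rainbow Ws m C \<sigma>"
    using rb\<^sub>0 unfolding C_def by (rule rainbow_subset) blast
  moreover have "is_cover V E C"
    using optimal_rainbow_is_cover[OF sg ni covers ind max large_I \<open>rainbow Ws m C \<sigma>\<close>
        essential_prune[of E I C\<^sub>0, folded C_def]] opt opt'
    unfolding same by blast
  ultimately show ?thesis
    using that by blast
qed

theorem corollary3p3:
  fixes V :: "'a set" and E :: "'a \<Rightarrow> 'a \<Rightarrow> bool" and Ws :: "nat \<Rightarrow> 'a set"
  assumes "simple_graph V E"
    and "no_isolated V E"
    and "\<forall>i<card V - igamma V E. is_cover V E (Ws i)"
  shows "\<exists>S w. S \<subseteq> {..<card V - igamma V E} \<and> (\<forall>i\<in>S. w i \<in> Ws i)
              \<and> is_cover V E (w ` S)"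
proof -
  have "card V \<le> (card V - igamma V E) + igamma V E"
    by arith
  then obtain C \<sigma> where rb: "rainbow Ws (card V - igamma V E) C \<sigma>" and "is_cover V E C"
    using exists_rainbow_cover[OF assms] by blast
  then have "\<sigma> ` C \<subseteq> {..<card V - igamma V E}"
    and "\<forall>i\<in>\<sigma> ` C. the_inv_into C \<sigma> i \<in> Ws i"
    and "is_cover V E (the_inv_into C \<sigma> ` \<sigma> ` C)"
    using rb by (auto simp: rainbow_def the_inv_into_f_f the_inv_into_onto)
  then show ?thesis
    by blast
qed

end
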